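(* Let $m\ge 2$ be an integer and let $n$ be a positive integer with $m^j\le n<m^{j+1}$ for some integer $j\ge 0$, with base $m$ representation $n=\alpha_j m^j+\cdots+\alpha_1 m+\alpha_0$ ($\alpha_j>0$, $0\le\alpha_i\le m-1$). For $i\ge 1$ let $\chi_i=0$ if $\alpha_{i-1}>0$ and $\chi_i=1$ if $\alpha_{i-1}=0$. Then the number $c_m(n)$ of $m$-ary partitions of $n$ without gaps satisfies \[ c_m(n)=1+\sum_{r=1}^{j}\ \sum_{k_r=\chi_r}^{\lfloor n/m^r\rfloor-1}\ \sum_{k_{r-1}=\chi_{r-1}}^{\alpha_{r-1}-1+mk_r}\cdots\sum_{k_1=\chi_1}^{\alpha_1-1+mk_2}1, \] that is, $c_m(n)=1+\sum_{r=1}^j N_r$, where $N_r$ is the number of integer tuples $(k_r,\ldots,k_1)$ with $\chi_r\le k_r\le \lfloor n/m^r\rfloor-1$ and $\chi_i\le k_i\le \alpha_i-1+mk_{i+1}$ for $1\le i\le r-1$.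
   Context: An $m$-ary partition of a positive integer $n$ is a partition of $n$ in which every part is a power of $m$. It is without gaps if, whenever $m^i$ is its largest part, every $m^k$ with $0\le k<i$ also appears as a part. $c_m(n)$ denotes the number of $m$-ary partitions of $n$ without gaps. $\lfloor a\rfloor$ is the floor of $a$. *)

theory Defs
  imports Complex_Main "HOL-Library.Multiset"
begin

definition mary_partition :: "nat \<Rightarrow> nat \<Rightarrow> nat multiset \<Rightarrow> bool" where
  "mary_partition m n P \<longleftrightarrow> (\<forall>x\<in>#P. \<exists>i. x = m ^ i) \<and> sum_mset P = n"

definition without_gaps :: "nat \<Rightarrow> nat multiset \<Rightarrow> bool" where
  "without_gaps m P \<longleftrightarrow>
     (\<forall>i. m ^ i = Max (set_mset P) \<longrightarrow> (\<forall>k<i. m ^ k \<in># P))"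

definition c :: "nat \<Rightarrow> nat \<Rightarrow> nat" where
  "c m n = card {P. mary_partition m n P \<and> without_gaps m P}"

definition digit :: "nat \<Rightarrow> nat \<Rightarrow> nat \<Rightarrow> nat" where
  "digit m n i = n div m ^ i mod m"

definition chi :: "nat \<Rightarrow> nat \<Rightarrow> nat \<Rightarrow> int" where
  "chi m n i = (if digit m n (i - 1) > 0 then 0 else 1)"

text \<open>N_r: number of integer tuples (k_r,...,k_1), encoded as functions on {1..r}
  (zero outside), with the stated bounds.\<close>
definition N :: "nat \<Rightarrow> nat \<Rightarrow> nat \<Rightarrow> nat" where
  "N m n r = card {k :: nat \<Rightarrow> int.
      (\<forall>i. i \<notin> {1..r} \<longrightarrow> k i = 0) \<and>
      chi m n r \<le> k r \<and> k r \<le> \<lfloor>real n / real m ^ r\<rfloor> - 1 \<and>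
      (\<forall>i\<in>{1..<r}. chi m n i \<le> k i \<and>
                    k i \<le> int (digit m n i) - 1 + int m * k (i + 1))}"

end

theory Submission
  imports Defs
begin

text \<open>A gap-free \<open>m\<close>-ary partition of \<open>n\<close> with largest part \<open>m^r\<close> is the same as a
  vector of multiplicities \<open>e_0, \<dots>, e_r \<ge> 1\<close> with \<open>\<Sum> e_i m^i = n\<close>, and \<open>r \<le> j\<close>
  since \<open>m^r \<le> n\<close>. For \<open>r = 0\<close> only \<open>1 + \<dots> + 1\<close> remains. For \<open>r \<ge> 1\<close> put
  \<open>k_i = \<lfloor>n/m^i\<rfloor> - T_i\<close> with the tail value \<open>T_i = \<Sum>\<^bsub>i \<le> l \<le> r\<^esub> e_l m^(l-i)\<close>. As
  \<open>T_i = e_i + m T_(i+1)\<close> and \<open>\<lfloor>n/m^i\<rfloor> = m \<lfloor>n/m^(i+1)\<rfloor> + \<alpha>_i\<close>, the conditions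
  \<open>e_i \<ge> 1\<close> become exactly the upper bounds on the \<open>k_i\<close> (and \<open>\<chi>_1 \<le> k_1\<close> for
  \<open>i = 0\<close>), while the other lower bounds \<open>\<chi>_i \<le> k_i\<close> hold automatically because
  \<open>T_i \<le> \<lfloor>n/m^i\<rfloor>\<close>, strictly if \<open>\<alpha>_(i-1) = 0\<close>. Hence \<open>N_r\<close> counts the gap-free
  partitions with largest part \<open>m^r\<close>.\<close>

lemma floor_divide_power_of_nat: "\<lfloor>real n / real m ^ r\<rfloor> = int (n div m ^ r)"
  by (metis floor_divide_of_nat_eq of_nat_power of_int_of_nat_eq)

lemma div_power_Suc_digit: "n div m ^ i = m * (n div m ^ Suc i) + digit m n i"
proof -
  have "n div m ^ Suc i = n div m ^ i div m" by (simp only: power_Suc2 div_mult2_eq)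
  then show ?thesis by (simp add: digit_def)
qed

definition pos_expansions :: "nat \<Rightarrow> nat \<Rightarrow> nat \<Rightarrow> (nat \<Rightarrow> nat) set" where
  "pos_expansions m n r =
     {e. (\<forall>i>r. e i = 0) \<and> (\<forall>i\<le>r. 1 \<le> e i) \<and> (\<Sum>i\<le>r. e i * m ^ i) = n}"

lemma finite_pos_expansions:
  assumes "m > 0"
  shows "finite (pos_expansions m n r)"
proof (rule finite_subset)
  have "e i \<le> n" if "e \<in> pos_expansions m n r" "i \<le> r" for e i
  proof -
    have "e i \<le> e i * m ^ i" using assms by simp
    also have "\<dots> \<le> (\<Sum>i\<le>r. e i * m ^ i)"
      using that(2) by (intro member_le_sum) auto
    finally show ?thesis using that(1) by (simp add: pos_expansions_def)
  qed
  then show "pos_expansions m n r \<subseteq>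
      {e. \<forall>i. (i \<in> {..r} \<longrightarrow> e i \<in> {..n}) \<and> (i \<notin> {..r} \<longrightarrow> e i = 0)}"
    by (auto simp: pos_expansions_def)
qed (rule finite_set_of_finite_funs; simp)

lemma pos_expansions_0:
  assumes "n > 0"
  shows "pos_expansions m n 0 = {\<lambda>i. if i = 0 then n else 0}"
  using assms by (auto simp: pos_expansions_def)

definition mset_of_mults :: "nat \<Rightarrow> nat \<Rightarrow> (nat \<Rightarrow> nat) \<Rightarrow> nat multiset" where
  "mset_of_mults m r e = (\<Sum>i\<le>r. replicate_mset (e i) (m ^ i))"

lemma count_mset_of_mults_power:
  assumes "m \<ge> 2"
  shows "count (mset_of_mults m r e) (m ^ i) = (if i \<le> r then e i else 0)"
proof -
  have "count (mset_of_mults m r e) (m ^ i) = (\<Sum>l\<le>r. if l = i then e l else 0)"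
    unfolding mset_of_mults_def count_sum using assms by (intro sum.cong) auto
  then show ?thesis by simp
qed

lemma set_mset_of_mults: "set_mset (mset_of_mults m r e) = (\<lambda>i. m ^ i) ` {i. i \<le> r \<and> e i > 0}"
  by (auto simp: mset_of_mults_def set_mset_sum)

lemma sum_mset_of_mults: "sum_mset (mset_of_mults m r e) = (\<Sum>i\<le>r. e i * m ^ i)"
  by (induction r) (simp_all add: mset_of_mults_def)

definition gapless_partitions_top :: "nat \<Rightarrow> nat \<Rightarrow> nat \<Rightarrow> nat multiset set" where
  "gapless_partitions_top m n r =
     {P. mary_partition m n P \<and> without_gaps m P \<and> Max (set_mset P) = m ^ r}"

lemma mset_of_mults_gapless:
  assumes "m \<ge> 2" and e: "e \<in> pos_expansions m n r"
  shows "mset_of_mults m r e \<in> gapless_partitions_top m n r"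
proof -
  have set_eq: "set_mset (mset_of_mults m r e) = (\<lambda>i. m ^ i) ` {..r}"
    using e unfolding set_mset_of_mults by (auto simp: pos_expansions_def)
  have "Max ((\<lambda>i. m ^ i) ` {..r}) = m ^ r"
    by (rule Max_eqI) (use assms(1) in \<open>auto intro: power_increasing\<close>)
  moreover have "m ^ i = m ^ r \<longleftrightarrow> i = r" for i
    using assms(1) by (simp add: power_inject_exp)
  ultimately show ?thesis
    using e set_eq sum_mset_of_mults[of m r e]
    by (auto simp: gapless_partitions_top_def mary_partition_def without_gaps_def
        pos_expansions_def)
qed

lemma gapless_partitions_top_eq_image:
  assumes m: "m \<ge> 2" and n: "n > 0"
  shows "gapless_partitions_top m n r = mset_of_mults m r ` pos_expansions m n r"
proof
  show "mset_of_mults m r ` pos_expansions m n r \<subseteq> gapless_partitions_top m n r"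
    using mset_of_mults_gapless[OF m] by blast
  show "gapless_partitions_top m n r \<subseteq> mset_of_mults m r ` pos_expansions m n r"
  proof
    fix P assume P: "P \<in> gapless_partitions_top m n r"
    have powers: "\<And>x. x \<in># P \<Longrightarrow> \<exists>i. x = m ^ i" and sum_P: "sum_mset P = n"
      and gapless: "without_gaps m P" and max_P: "Max (set_mset P) = m ^ r"
      using P by (auto simp: gapless_partitions_top_def mary_partition_def)
    have "set_mset P \<noteq> {}" using sum_P n by auto
    then have top: "m ^ r \<in># P" using Max_in[of "set_mset P"] max_P by simp
    have below_top: "i \<le> r" if "m ^ i \<in># P" for i
    proof -
      have "m ^ i \<le> m ^ r" using Max_ge[OF finite_set_mset that] max_P by simp
      then show ?thesis using m power_le_imp_le_exp[of m i r] by simp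
    qed
    define e where "e i = (if i \<le> r then count P (m ^ i) else 0)" for i
    have P_eq: "mset_of_mults m r e = P"
    proof (rule multiset_eqI)
      fix x
      show "count (mset_of_mults m r e) x = count P x"
      proof (cases "\<exists>i. x = m ^ i")
        case True
        then obtain i where "x = m ^ i" by blast
        then show ?thesis
          using below_top count_mset_of_mults_power[OF m, of r e i]
          by (cases "i \<le> r") (auto simp: e_def, metis count_eq_zero_iff)
      next
        case False
        then show ?thesis using powers set_mset_of_mults[of m r e]
          by (metis (no_types, lifting) count_inI image_iff)
      qed
    qed
    have "1 \<le> e i" if "i \<le> r" for i
      using that top gapless max_P
      by (cases "i = r") (auto simp: e_def without_gaps_def Suc_le_eq)
    moreover have "(\<Sum>i\<le>r. e i * m ^ i) = n"
      using sum_mset_of_mults[of m r e] P_eq sum_P by simp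
    ultimately have "e \<in> pos_expansions m n r" by (auto simp: pos_expansions_def e_def)
    with P_eq show "P \<in> mset_of_mults m r ` pos_expansions m n r" by blast
  qed
qed

lemma inj_on_mset_of_mults:
  assumes "m \<ge> 2"
  shows "inj_on (mset_of_mults m r) (pos_expansions m n r)"
proof
  fix e e' assume "e \<in> pos_expansions m n r" "e' \<in> pos_expansions m n r"
    and "mset_of_mults m r e = mset_of_mults m r e'"
  then have "e i = e' i" for i
    using count_mset_of_mults_power[OF assms, of r _ i]
    by (cases "i \<le> r") (metis, simp add: pos_expansions_def)
  then show "e = e'" by blast
qed

definition N_tuples :: "nat \<Rightarrow> nat \<Rightarrow> nat \<Rightarrow> (nat \<Rightarrow> int) set" where
  "N_tuples m n r = {k :: nat \<Rightarrow> int.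
      (\<forall>i. i \<notin> {1..r} \<longrightarrow> k i = 0) \<and>
      chi m n r \<le> k r \<and> k r \<le> \<lfloor>real n / real m ^ r\<rfloor> - 1 \<and>
      (\<forall>i\<in>{1..<r}. chi m n i \<le> k i \<and>
                    k i \<le> int (digit m n i) - 1 + int m * k (i + 1))}"

lemma N_eq_card_N_tuples: "N m n r = card (N_tuples m n r)"
  by (simp add: N_def N_tuples_def)

definition tail_value :: "nat \<Rightarrow> nat \<Rightarrow> (nat \<Rightarrow> nat) \<Rightarrow> nat \<Rightarrow> int" where
  "tail_value m r e i = (\<Sum>l = i..r. int (e l) * int m ^ (l - i))"

lemma tail_value_0: "tail_value m r e 0 = int (\<Sum>i\<le>r. e i * m ^ i)"
  by (simp add: tail_value_def atLeast0AtMost)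

lemma tail_value_beyond: "r < i \<Longrightarrow> tail_value m r e i = 0"
  by (simp add: tail_value_def)

lemma tail_value_Suc:
  assumes "i \<le> r"
  shows "tail_value m r e i = int (e i) + int m * tail_value m r e (Suc i)"
proof -
  have "{i..r} = insert i {Suc i..r}" using assms by auto
  then have "tail_value m r e i = int (e i) + (\<Sum>l = Suc i..r. int (e l) * int m ^ (l - i))"
    by (simp add: tail_value_def)
  also have "(\<Sum>l = Suc i..r. int (e l) * int m ^ (l - i)) = int m * tail_value m r e (Suc i)"
    unfolding tail_value_def sum_distrib_left
  proof (rule sum.cong)
    fix l assume "l \<in> {Suc i..r}"
    then have "l - i = Suc (l - Suc i)" by auto
    then show "int (e l) * int m ^ (l - i) = int m * (int (e l) * int m ^ (l - Suc i))"
      by simp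
  qed simp
  finally show ?thesis .
qed

lemma tail_value_Suc_less:
  assumes e: "e \<in> pos_expansions m n r" and "i < r"
    and le: "tail_value m r e i \<le> int (n div m ^ i)"
  shows "int m * tail_value m r e (Suc i) < int m * int (n div m ^ Suc i) + int (digit m n i)"
proof -
  have "1 \<le> e i" using e \<open>i < r\<close> by (simp add: pos_expansions_def)
  then show ?thesis
    using le tail_value_Suc[of i r m e] div_power_Suc_digit[of n m i] \<open>i < r\<close> by simp
qed

lemma tail_value_le_div:
  assumes "m > 0" and e: "e \<in> pos_expansions m n r" and "i \<le> r"
  shows "tail_value m r e i \<le> int (n div m ^ i)"
  using \<open>i \<le> r\<close>
proof (induction i)
  case 0
  then show ?case using e by (simp add: tail_value_0 pos_expansions_def)
next
  case (Suc i)
  have "int m * tail_value m r e (Suc i) < int m * int (n div m ^ Suc i) + int (digit m n i)"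
    using Suc by (intro tail_value_Suc_less[OF e]) simp_all
  also have "\<dots> \<le> int m * (int (n div m ^ Suc i) + 1)"
    using assms(1) by (simp add: digit_def algebra_simps)
  finally show ?case using assms(1) by (simp add: mult_less_cancel_left_pos)
qed

lemma tail_value_less_div_if_digit_0:
  assumes "m > 0" and e: "e \<in> pos_expansions m n r" and "i < r" and "digit m n i = 0"
  shows "tail_value m r e (Suc i) < int (n div m ^ Suc i)"
proof -
  have "int m * tail_value m r e (Suc i) < int m * int (n div m ^ Suc i)"
    using tail_value_Suc_less[OF e \<open>i < r\<close> tail_value_le_div[OF assms(1) e]] assms by simp
  then show ?thesis using assms(1) by (simp add: mult_less_cancel_left_pos)
qed

definition expansion_to_tuple :: "nat \<Rightarrow> nat \<Rightarrow> nat \<Rightarrow> (nat \<Rightarrow> nat) \<Rightarrow> nat \<Rightarrow> int" where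
  "expansion_to_tuple m n r e i =
     (if 1 \<le> i \<and> i \<le> r then int (n div m ^ i) - tail_value m r e i else 0)"

lemma expansion_to_tuple_mem:
  assumes "m > 0" and "r \<ge> 1" and e: "e \<in> pos_expansions m n r"
  shows "expansion_to_tuple m n r e \<in> N_tuples m n r"
proof -
  let ?k = "expansion_to_tuple m n r e"
  have pos: "\<And>i. i \<le> r \<Longrightarrow> 1 \<le> e i" using e by (simp add: pos_expansions_def)
  have chi_le: "chi m n i \<le> ?k i" if "1 \<le> i" "i \<le> r" for i
  proof (cases "digit m n (i - 1) = 0")
    case True
    then have "tail_value m r e (Suc (i - 1)) < int (n div m ^ Suc (i - 1))"
      using that by (intro tail_value_less_div_if_digit_0[OF assms(1) e]) simp_all
    then show ?thesis using that True by (simp add: chi_def expansion_to_tuple_def)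
  next
    case False
    then show ?thesis
      using tail_value_le_div[OF assms(1) e that(2)] that
      by (simp add: chi_def expansion_to_tuple_def)
  qed
  have top_le: "?k r \<le> int (n div m ^ r) - 1"
    using tail_value_Suc[of r r m e] tail_value_beyond[of r "Suc r" m e] pos[of r] assms(2)
    by (simp add: expansion_to_tuple_def)
  have step_le: "?k i \<le> int (digit m n i) - 1 + int m * ?k (i + 1)" if "1 \<le> i" "i < r" for i
    using tail_value_Suc[of i r m e] pos[of i] div_power_Suc_digit[of n m i] that
    by (simp add: expansion_to_tuple_def algebra_simps)
  show ?thesis
    unfolding N_tuples_def floor_divide_power_of_nat
    using chi_le top_le step_le assms(2) by (auto simp: expansion_to_tuple_def)
qed

definition tuple_tail :: "nat \<Rightarrow> nat \<Rightarrow> nat \<Rightarrow> (nat \<Rightarrow> int) \<Rightarrow> nat \<Rightarrow> int" where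
  "tuple_tail m n r k i = (if i \<le> r then int (n div m ^ i) - k i else 0)"

definition tuple_to_expansion :: "nat \<Rightarrow> nat \<Rightarrow> nat \<Rightarrow> (nat \<Rightarrow> int) \<Rightarrow> nat \<Rightarrow> nat" where
  "tuple_to_expansion m n r k i =
     (if i \<le> r then nat (tuple_tail m n r k i - int m * tuple_tail m n r k (Suc i)) else 0)"

lemma tuple_tail_Suc_less:
  assumes "m > 0" and "r \<ge> 1" and k: "k \<in> N_tuples m n r" and "i \<le> r"
  shows "int m * tuple_tail m n r k (Suc i) < tuple_tail m n r k i"
proof -
  have outside: "\<And>i. i \<notin> {1..r} \<Longrightarrow> k i = 0"
    and top: "chi m n r \<le> k r \<and> k r \<le> int (n div m ^ r) - 1"
    and step: "\<And>i. i \<in> {1..<r} \<Longrightarrow>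
                 chi m n i \<le> k i \<and> k i \<le> int (digit m n i) - 1 + int m * k (i + 1)"
    using k unfolding N_tuples_def floor_divide_power_of_nat by auto
  consider "i = r" | "i = 0" "0 < r" | "1 \<le> i" "i < r"
    using \<open>i \<le> r\<close> by linarith
  then show ?thesis
  proof cases
    case 1
    then show ?thesis using top by (simp add: tuple_tail_def)
  next
    case 2
    have "chi m n 1 \<le> k 1" using top step[of 1] assms(2) by (cases "r = 1") auto
    then have "0 < int (digit m n 0) + int m * k 1"
      using assms(1) by (cases "digit m n 0 > 0") (auto simp: chi_def add_pos_nonneg)
    then show ?thesis
      using 2 outside[of 0] arg_cong[OF div_power_Suc_digit[of n m 0], of int]
      by (simp add: tuple_tail_def algebra_simps)
  next
    case 3
    then show ?thesis
      using step[of i] div_power_Suc_digit[of n m i] by (simp add: tuple_tail_def algebra_simps)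
  qed
qed

lemma tail_value_tuple_to_expansion:
  assumes "m > 0" and "r \<ge> 1" and k: "k \<in> N_tuples m n r" and "i \<le> Suc r"
  shows "tail_value m r (tuple_to_expansion m n r k) i = tuple_tail m n r k i"
  using \<open>i \<le> Suc r\<close>
proof (induction i rule: inc_induct)
  case base
  then show ?case by (simp add: tail_value_beyond tuple_tail_def)
next
  case (step i)
  then show ?case
    using tail_value_Suc[of i r m] tuple_tail_Suc_less[OF assms(1-3), of i]
    by (simp add: tuple_to_expansion_def)
qed

lemma tuple_to_expansion_mem:
  assumes "m > 0" and "r \<ge> 1" and k: "k \<in> N_tuples m n r"
  shows "tuple_to_expansion m n r k \<in> pos_expansions m n r"
proof -
  have "k 0 = 0" using k by (simp add: N_tuples_def)
  then have "int (\<Sum>i\<le>r. tuple_to_expansion m n r k i * m ^ i) = int n"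
    using tail_value_tuple_to_expansion[OF assms, of 0]
    by (simp only: tail_value_0 tuple_tail_def) simp
  then have "(\<Sum>i\<le>r. tuple_to_expansion m n r k i * m ^ i) = n"
    by (simp only: of_nat_eq_iff)
  moreover have "1 \<le> tuple_to_expansion m n r k i" if "i \<le> r" for i
    using tuple_tail_Suc_less[OF assms that] that by (simp add: tuple_to_expansion_def)
  ultimately show ?thesis
    by (simp add: pos_expansions_def tuple_to_expansion_def)
qed

lemma expansion_to_tuple_inverse:
  assumes "m > 0" and "r \<ge> 1" and k: "k \<in> N_tuples m n r"
  shows "expansion_to_tuple m n r (tuple_to_expansion m n r k) = k"
proof
  fix i
  have "k i = 0" if "\<not> (1 \<le> i \<and> i \<le> r)" using k that by (simp add: N_tuples_def)
  then show "expansion_to_tuple m n r (tuple_to_expansion m n r k) i = k i"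
    using tail_value_tuple_to_expansion[OF assms, of i]
    by (cases "1 \<le> i \<and> i \<le> r") (auto simp: expansion_to_tuple_def tuple_tail_def)
qed

lemma tuple_to_expansion_inverse:
  assumes e: "e \<in> pos_expansions m n r"
  shows "tuple_to_expansion m n r (expansion_to_tuple m n r e) = e"
proof
  fix i
  have sum: "(\<Sum>i\<le>r. e i * m ^ i) = n" using e by (simp add: pos_expansions_def)
  have tail: "tuple_tail m n r (expansion_to_tuple m n r e) i = tail_value m r e i" for i
    using sum tail_value_beyond[of r i m e]
    by (cases "i = 0") (auto simp: tuple_tail_def expansion_to_tuple_def tail_value_0)
  show "tuple_to_expansion m n r (expansion_to_tuple m n r e) i = e i"
    using tail_value_Suc[of i r m e] e
    by (cases "i \<le> r") (auto simp: tuple_to_expansion_def tail pos_expansions_def)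
qed

lemma card_N_tuples:
  assumes "m > 0" and "r \<ge> 1"
  shows "card (N_tuples m n r) = card (pos_expansions m n r)"
proof -
  have "bij_betw (tuple_to_expansion m n r) (N_tuples m n r) (pos_expansions m n r)"
    by (rule bij_betw_byWitness[where f' = "expansion_to_tuple m n r"])
      (use assms expansion_to_tuple_inverse tuple_to_expansion_inverse
         tuple_to_expansion_mem expansion_to_tuple_mem in auto)
  then show ?thesis by (rule bij_betw_same_card)
qed

lemma card_gapless_partitions_top:
  assumes "m \<ge> 2" and "n > 0"
  shows "card (gapless_partitions_top m n r) = card (pos_expansions m n r)"
  using gapless_partitions_top_eq_image[OF assms] inj_on_mset_of_mults[OF assms(1)]
  by (simp add: card_image)

lemma gapless_partitions_eq_UN:
  assumes m: "m \<ge> 2" and n: "n > 0" and "n < m ^ (j + 1)"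
  shows "{P. mary_partition m n P \<and> without_gaps m P} = (\<Union>r\<le>j. gapless_partitions_top m n r)"
proof
  show "(\<Union>r\<le>j. gapless_partitions_top m n r) \<subseteq> {P. mary_partition m n P \<and> without_gaps m P}"
    by (auto simp: gapless_partitions_top_def)
  show "{P. mary_partition m n P \<and> without_gaps m P} \<subseteq> (\<Union>r\<le>j. gapless_partitions_top m n r)"
  proof clarify
    fix P assume P: "mary_partition m n P" "without_gaps m P"
    then have sum_P: "sum_mset P = n" by (simp add: mary_partition_def)
    then have "set_mset P \<noteq> {}" using n by auto
    then have max_in: "Max (set_mset P) \<in># P" by simp
    with P obtain r where r: "Max (set_mset P) = m ^ r" by (auto simp: mary_partition_def)
    have "m ^ r \<le> n" using sum_mset.remove[OF max_in] r sum_P by simp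
    then have "r \<le> j" using assms(3) m power_less_imp_less_exp[of m r "j + 1"] by simp
    then show "P \<in> (\<Union>r\<le>j. gapless_partitions_top m n r)"
      using P r by (auto simp: gapless_partitions_top_def)
  qed
qed

lemma c_eq_sum_card_gapless_partitions_top:
  assumes m: "m \<ge> 2" and n: "n > 0" and "n < m ^ (j + 1)"
  shows "c m n = (\<Sum>r\<le>j. card (gapless_partitions_top m n r))"
proof -
  have "finite (gapless_partitions_top m n r)" for r
    using gapless_partitions_top_eq_image[OF m n] finite_pos_expansions m by simp
  moreover have "gapless_partitions_top m n r \<inter> gapless_partitions_top m n s = {}"
    if "r \<noteq> s" for r s
    using that m by (auto simp: gapless_partitions_top_def power_inject_exp)
  ultimately show ?thesis
    unfolding c_def gapless_partitions_eq_UN[OF assms] by (simp add: card_UN_disjoint)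
qed

theorem theorem1p3:
  fixes m n j :: nat
  assumes "m \<ge> 2" and "n > 0" and "m ^ j \<le> n" and "n < m ^ (j + 1)"
  shows "c m n = 1 + (\<Sum>r = 1..j. N m n r)"
proof -
  note m = assms(1) and n = assms(2)
  have "c m n = (\<Sum>r\<le>j. card (pos_expansions m n r))"
    using c_eq_sum_card_gapless_partitions_top[OF m n assms(4)]
      card_gapless_partitions_top[OF m n] by simp
  also have "\<dots> = card (pos_expansions m n 0) + (\<Sum>r = 1..j. card (pos_expansions m n r))"
    by (simp add: atMost_atLeast0 sum.atLeast_Suc_atMost)
  also have "card (pos_expansions m n 0) = 1"
    using pos_expansions_0[OF n] by simp
  also have "(\<Sum>r = 1..j. card (pos_expansions m n r)) = (\<Sum>r = 1..j. N m n r)"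
    using m by (intro sum.cong) (simp_all add: N_eq_card_N_tuples card_N_tuples)
  finally show ?thesis .
qed

end
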